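(* Let $\rho:[0,1]\to(0,1]$ be a weakly increasing continuous function, and let $X_{opt}\in[0,1]$ be a maximizer over $x\in[0,1]$ of $\rho(x)\left(1-\int_0^x\frac{dx'}{\rho(x')}\right)$. Consider the pay-to-play mechanism defined by $\rho$, and fix a buyer type $v$ with total value $V$. Then there exists a dominant strategy for this buyer in which it pays at least $X_{opt}V$ in total to the seller. Moreover, if $X_{opt}$ is a strict maximizer, then every dominant strategy of the buyer pays at least $X_{opt}V$.
   Context: Continuous-time single-buyer setting: the buyer has a Lipschitz-continuous value function $v:[0,1]\to[0,\infty)$ with total value $V=\int_0^1 v(t)\,dt$ known to the seller. The pay-to-play mechanism defined by $\rho$: the buyer chooses a payment rate $x(t)\ge0$; letting $X(t)=\int_0^t x(s)\,ds$ be the total paid by time $t$, the seller allocates the item at rate $r(t)=\rho(X(t)/V)$; the buyer is limited-liability, so $x(t)\le r(t)v(t)$ for all $t$. The buyer's utility is $\int_0^1(r(t)v(t)-x(t))\,dt$; a dominant strategy is a utility-maximizing payment strategy. *)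

theory Defs
  imports "HOL-Analysis.Analysis"
begin

definition total_paid :: "(real \<Rightarrow> real) \<Rightarrow> real" where
  "total_paid x = integral {0..1} x"

definition alloc_rate :: "(real \<Rightarrow> real) \<Rightarrow> real \<Rightarrow> (real \<Rightarrow> real) \<Rightarrow> real \<Rightarrow> real" where
  "alloc_rate \<rho> V x t = \<rho> (integral {0..t} x / V)"

definition feasible :: "(real \<Rightarrow> real) \<Rightarrow> (real \<Rightarrow> real) \<Rightarrow> real \<Rightarrow> (real \<Rightarrow> real) \<Rightarrow> bool" where
  "feasible \<rho> v V x \<longleftrightarrow> x integrable_on {0..1} \<and>
     (\<forall>t\<in>{0..1}. 0 \<le> x t \<and> x t \<le> alloc_rate \<rho> V x t * v t)"

definition utility :: "(real \<Rightarrow> real) \<Rightarrow> (real \<Rightarrow> real) \<Rightarrow> real \<Rightarrow> (real \<Rightarrow> real) \<Rightarrow> real" where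
  "utility \<rho> v V x = integral {0..1} (\<lambda>t. alloc_rate \<rho> V x t * v t - x t)"

definition dominant :: "(real \<Rightarrow> real) \<Rightarrow> (real \<Rightarrow> real) \<Rightarrow> real \<Rightarrow> (real \<Rightarrow> real) \<Rightarrow> bool" where
  "dominant \<rho> v V x \<longleftrightarrow> feasible \<rho> v V x \<and>
     (\<forall>y. feasible \<rho> v V y \<longrightarrow> utility \<rho> v V y \<le> utility \<rho> v V x)"

definition objective :: "(real \<Rightarrow> real) \<Rightarrow> real \<Rightarrow> real" where
  "objective \<rho> a = \<rho> a * (1 - integral {0..a} (\<lambda>y. 1 / \<rho> y))"

end

theory Submission
  imports Defs
begin

text \<open>Write \<open>u = X / V\<close> for the fraction of \<open>V\<close> paid so far and \<open>G a = \<integral>\<^sub>0\<^sup>a 1/\<rho>\<close>, so that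
  \<open>objective \<rho> a = \<rho> a (1 - G a)\<close>.  Limited liability means that \<open>q = x / \<rho>(u)\<close> is at most \<open>v\<close>,
  and since \<open>\<rho>(u t) \<le> \<rho>(u 1)\<close> the utility \<open>\<integral> \<rho>(u) (v - q)\<close> is at most \<open>\<rho>(u 1) (V - \<integral> q)\<close>.
  Substituting \<open>s = u t\<close> gives \<open>\<integral> q \<ge> V G(u 1)\<close>, hence every feasible strategy has utility
  at most \<open>V objective \<rho> (u 1) \<le> V objective \<rho> X\<^sub>o\<^sub>p\<^sub>t\<close>.  The bound is attained by paying at
  the full allowed rate until the fraction \<open>X\<^sub>o\<^sub>p\<^sub>t\<close> has been paid and nothing afterwards; and if
  \<open>X\<^sub>o\<^sub>p\<^sub>t\<close> is a strict maximiser, a strategy attaining it must have \<open>u 1 = X\<^sub>o\<^sub>p\<^sub>t\<close>.\<close>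

lemma fine_increments_le:
  fixes \<phi> \<psi> :: "real \<Rightarrow> real"
  assumes "a \<le> b" "0 < \<delta>"
    and fine: "\<And>c d. a \<le> c \<Longrightarrow> c \<le> d \<Longrightarrow> d \<le> b \<Longrightarrow> d - c < \<delta> \<Longrightarrow> \<phi> d - \<phi> c \<le> \<psi> d - \<psi> c"
  shows "\<phi> b - \<phi> a \<le> \<psi> b - \<psi> a"
proof -
  obtain n :: nat where n_large: "(b - a) / \<delta> < real n"
    using reals_Archimedean2 by blast
  moreover have "0 \<le> (b - a) / \<delta>" using assms(1,2) by simp
  ultimately have n_pos: "0 < n" by linarith
  define h where "h = (b - a) / real n"
  have h: "0 \<le> h" "h < \<delta>" "real n * h = b - a"
    using n_large n_pos assms(1,2) by (auto simp: h_def pos_divide_less_eq mult.commute)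
  define t where "t k = a + real k * h" for k :: nat
  have t_range: "a \<le> t k" "t k \<le> b" if "k \<le> n" for k
  proof -
    have "real k * h \<le> real n * h" using that h(1) by (intro mult_right_mono) auto
    then show "a \<le> t k" "t k \<le> b" using h by (auto simp: t_def)
  qed
  have step: "\<phi> (t (Suc k)) - \<phi> (t k) \<le> \<psi> (t (Suc k)) - \<psi> (t k)" if "k < n" for k
    by (rule fine) (use that t_range[of k] t_range[of "Suc k"] h in \<open>auto simp: t_def algebra_simps\<close>)
  have "\<phi> (t n) - \<phi> (t 0) = (\<Sum>k<n. \<phi> (t (Suc k)) - \<phi> (t k))"
    by (rule sum_lessThan_telescope[symmetric])
  also have "\<dots> \<le> (\<Sum>k<n. \<psi> (t (Suc k)) - \<psi> (t k))"
    by (rule sum_mono) (use step in auto)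
  also have "\<dots> = \<psi> (t n) - \<psi> (t 0)"
    by (rule sum_lessThan_telescope)
  finally show ?thesis using h(3) by (simp add: t_def)
qed

lemma continuous_times_nonneg_integrable_on:
  fixes g f :: "real \<Rightarrow> real"
  assumes "continuous_on {a..b} g" "f integrable_on {a..b}" "\<And>t. t \<in> {a..b} \<Longrightarrow> 0 \<le> f t"
  shows "(\<lambda>t. g t * f t) integrable_on {a..b}"
proof -
  have "(\<lambda>t. g t * f t) absolutely_integrable_on {a..b}"
  proof (rule absolutely_integrable_bounded_measurable_product_real)
    show "g \<in> borel_measurable (lebesgue_on {a..b})"
      by (rule continuous_imp_measurable_on_sets_lebesgue[OF assms(1)]) auto
    show "bounded (g ` {a..b})"
      by (rule compact_imp_bounded[OF compact_continuous_image[OF assms(1)]]) auto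
    show "f absolutely_integrable_on {a..b}"
      by (rule nonnegative_absolutely_integrable_1[OF assms(2)]) (use assms(3) in auto)
  qed auto
  then show ?thesis using set_lebesgue_integral_eq_integral(1) by blast
qed

text \<open>Substituting \<open>s = X t\<close> bounds the integral of \<open>f\<close> over \<open>[0, X b]\<close> by that of \<open>f(X t) y t\<close>
  over \<open>[a, b]\<close> (in fact with equality).  As \<open>X\<close> is only absolutely continuous, no chain rule is
  available; instead the bound is proved on fine partitions of \<open>[a, b]\<close>, on each piece of which
  the decreasing \<open>f\<close> is compared with its values at the end points.\<close>

locale antimono_substitution =
  fixes f y :: "real \<Rightarrow> real" and a b :: real
  assumes a_le_b: "a \<le> b"
    and y_int: "y integrable_on {a..b}" and y_nonneg: "\<And>t. t \<in> {a..b} \<Longrightarrow> 0 \<le> y t"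
    and f_cont: "continuous_on {0..integral {a..b} y} f"
    and f_antimono: "antimono_on {0..integral {a..b} y} f"
begin

definition X :: "real \<Rightarrow> real" where
  "X t = integral {a..t} y"

lemma y_integrable: "a \<le> c \<Longrightarrow> d \<le> b \<Longrightarrow> y integrable_on {c..d}"
  using integrable_subinterval_real[OF y_int] by auto

lemma X_diff: "a \<le> c \<Longrightarrow> c \<le> d \<Longrightarrow> d \<le> b \<Longrightarrow> X d - X c = integral {c..d} y"
  using Henstock_Kurzweil_Integration.integral_combine[of a c d y] y_integrable by (simp add: X_def)

lemma X_mono: "a \<le> c \<Longrightarrow> c \<le> d \<Longrightarrow> d \<le> b \<Longrightarrow> X c \<le> X d"
  using X_diff[of c d] integral_nonneg[OF y_integrable[of c d]] y_nonneg by fastforce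

lemma X_range: "t \<in> {a..b} \<Longrightarrow> X t \<in> {0..X b}"
  using X_mono[of a t] X_mono[of t b] by (simp add: X_def)

lemma f_X_cont: "continuous_on {a..b} (\<lambda>t. f (X t))"
proof (rule continuous_on_compose2[OF f_cont])
  show "continuous_on {a..b} X"
    unfolding X_def by (rule indefinite_integral_continuous_1[OF y_int])
qed (use X_range in \<open>auto simp: X_def\<close>)

lemma f_X_y_integrable: "a \<le> c \<Longrightarrow> d \<le> b \<Longrightarrow> (\<lambda>t. f (X t) * y t) integrable_on {c..d}"
  using continuous_times_nonneg_integrable_on[OF continuous_on_subset[OF f_X_cont] y_integrable]
    y_nonneg by auto

lemma integral_increment_le:
  assumes cd: "a \<le> c" "c \<le> d" "d \<le> b" and close: "f (X c) \<le> f (X d) + e"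
  shows "integral {X c..X d} f \<le> integral {c..d} (\<lambda>t. f (X t) * y t) + e * (X d - X c)"
proof -
  have Xcd: "X c \<in> {0..X b}" "X d \<in> {0..X b}" "X c \<le> X d"
    using X_range X_mono cd by auto
  have f_int: "f integrable_on {X c..X d}"
    using integrable_subinterval_real[OF integrable_continuous_interval[OF f_cont]] Xcd
    by (auto simp: X_def)
  have "integral {X c..X d} f \<le> integral {X c..X d} (\<lambda>_. f (X c))"
    by (rule integral_le[OF f_int]) (use Xcd f_antimono in \<open>auto simp: monotone_on_def X_def\<close>)
  also have "\<dots> \<le> (f (X d) + e) * (X d - X c)"
    using close Xcd mult_right_mono[of "f (X c)" "f (X d) + e" "X d - X c"] by (simp add: mult.commute)
  finally have upper: "integral {X c..X d} f \<le> f (X d) * (X d - X c) + e * (X d - X c)"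
    by (simp add: algebra_simps)
  have "f (X d) * (X d - X c) = integral {c..d} (\<lambda>t. f (X d) * y t)"
    using X_diff[OF cd] by simp
  also have "\<dots> \<le> integral {c..d} (\<lambda>t. f (X t) * y t)"
  proof (rule integral_le)
    show "(\<lambda>t. f (X d) * y t) integrable_on {c..d}"
      using y_integrable[of c d] cd by (intro integrable_on_mult_right) auto
    show "(\<lambda>t. f (X t) * y t) integrable_on {c..d}"
      using f_X_y_integrable cd by auto
    fix t assume "t \<in> {c..d}"
    then show "f (X d) * y t \<le> f (X t) * y t"
      using X_range[of t] X_mono[of t d] Xcd cd f_antimono y_nonneg[of t]
      by (intro mult_right_mono) (auto simp: monotone_on_def X_def)
  qed
  finally show ?thesis using upper by simp
qed

lemma integral_le_substituted_plus:
  assumes "0 < e"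
  shows "integral {0..X b} f \<le> integral {a..b} (\<lambda>t. f (X t) * y t) + e * X b"
proof -
  define F where "F s = integral {0..s} f" for s
  define R where "R t = integral {a..t} (\<lambda>t. f (X t) * y t)" for t
  have "uniformly_continuous_on {a..b} (\<lambda>t. f (X t))"
    by (rule compact_uniformly_continuous[OF f_X_cont]) auto
  then obtain \<delta> where \<delta>: "0 < \<delta>"
    and close: "\<And>c d. c \<in> {a..b} \<Longrightarrow> d \<in> {a..b} \<Longrightarrow> dist d c < \<delta> \<Longrightarrow> dist (f (X d)) (f (X c)) < e"
    unfolding uniformly_continuous_on_def using assms by metis
  have "F (X b) - F (X a) \<le> (R b + e * X b) - (R a + e * X a)"
  proof (rule fine_increments_le[OF a_le_b \<delta>])
    fix c d assume cd: "a \<le> c" "c \<le> d" "d \<le> b" "d - c < \<delta>"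
    have "F (X d) - F (X c) = integral {X c..X d} f"
      using Henstock_Kurzweil_Integration.integral_combine[of 0 "X c" "X d" f]
        integrable_subinterval_real[OF integrable_continuous_interval[OF f_cont]] X_range X_mono cd
      by (simp add: F_def X_def)
    also have "\<dots> \<le> integral {c..d} (\<lambda>t. f (X t) * y t) + e * (X d - X c)"
      using close[of c d] cd by (intro integral_increment_le) (auto simp: dist_real_def)
    also have "integral {c..d} (\<lambda>t. f (X t) * y t) = R d - R c"
      using Henstock_Kurzweil_Integration.integral_combine[of a c d, OF _ _ f_X_y_integrable] cd
      by (simp add: R_def)
    finally show "F (X d) - F (X c) \<le> (R d + e * X d) - (R c + e * X c)"
      by (simp add: algebra_simps)
  qed
  then show ?thesis by (simp add: F_def R_def X_def)
qed

lemma integral_le_substituted: "integral {0..X b} f \<le> integral {a..b} (\<lambda>t. f (X t) * y t)"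
proof (rule field_le_epsilon)
  fix e :: real assume "0 < e"
  have "0 \<le> X b" using X_range a_le_b by auto
  then have "e / (X b + 1) * X b \<le> e"
    using \<open>0 < e\<close> by (simp add: field_simps)
  then show "integral {0..X b} f \<le> integral {a..b} (\<lambda>t. f (X t) * y t) + e"
    using integral_le_substituted_plus[of "e / (X b + 1)"] \<open>0 < e\<close> \<open>0 \<le> X b\<close> by simp
qed

end

lemma inv_into_has_real_derivative:
  fixes F :: "real \<Rightarrow> real"
  assumes mono: "strict_mono_on {a..b} F" and cont: "continuous_on {a..b} F"
    and x: "a < x" "x < b" and deriv: "(F has_real_derivative D) (at x)" and "D \<noteq> 0"
  shows "(inv_into {a..b} F has_real_derivative inverse D) (at (F x))"
proof -
  let ?G = "inv_into {a..b} F"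
  have G_F: "?G (F t) = t" if "t \<in> {a..b}" for t
    using inv_into_f_f[OF strict_mono_on_imp_inj_on[OF mono] that] .
  have range: "{F a..F b} \<subseteq> F ` {a..b}"
    using IVT'[OF _ _ _ cont] x by fastforce
  have "continuous_on (F ` {a..b}) ?G"
    by (rule continuous_on_inv[OF cont]) (auto simp: G_F)
  then have "continuous_on {F a<..<F b} ?G"
    by (rule continuous_on_subset) (use range in auto)
  moreover have Fx: "F a < F x" "F x < F b"
    using mono x by (auto simp: strict_mono_on_def)
  ultimately have "isCont ?G (F x)"
    by (simp add: continuous_on_eq_continuous_at)
  moreover have "(F has_real_derivative D) (at (?G (F x)))"
    using deriv x G_F[of x] by simp
  ultimately show ?thesis
    using range \<open>D \<noteq> 0\<close> Fx
    by (intro DERIV_inverse_function[where a = "F a" and b = "F b"]) (auto intro!: f_inv_into_f)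
qed

lemma continuous_nonneg_integral_0_imp_0:
  fixes f :: "real \<Rightarrow> real"
  assumes "a < b" "continuous_on {a..b} f" "\<And>t. t \<in> {a..b} \<Longrightarrow> 0 \<le> f t"
    and "integral {a..b} f = 0" and "t \<in> {a..b}"
  shows "f t = 0"
proof -
  have "(f has_integral 0) (cbox a b)"
    using integrable_integral[OF integrable_continuous_interval[OF assms(2)]] assms(4) by simp
  then show ?thesis
    using has_integral_0_cbox_imp_0[of a b f t] assms by auto
qed

lemma total_paid_nonneg: "feasible \<rho> v V x \<Longrightarrow> 0 \<le> total_paid x"
  unfolding feasible_def total_paid_def by (auto intro: integral_nonneg)

lemma dominant_zero_of_zero_value:
  assumes "\<And>t. t \<in> {0..1} \<Longrightarrow> v t = 0"
  shows "dominant \<rho> v V (\<lambda>_. 0)"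
proof -
  have no_payment: "x t = 0" if "feasible \<rho> v V x" "t \<in> {0..1}" for x t
    using that assms[of t] unfolding feasible_def by force
  have "utility \<rho> v V x = integral {0..1} (\<lambda>_::real. 0::real)" if "feasible \<rho> v V x" for x
    unfolding utility_def by (rule Henstock_Kurzweil_Integration.integral_cong) (use no_payment[OF that] assms in auto)
  moreover have "feasible \<rho> v V (\<lambda>_. 0)"
    unfolding feasible_def using assms by auto
  ultimately show ?thesis
    unfolding dominant_def by simp
qed

locale pay_to_play =
  fixes \<rho> v :: "real \<Rightarrow> real" and V :: real
  assumes rho_cont: "continuous_on {0..1} \<rho>"
    and rho_mono: "mono_on {0..1} \<rho>"
    and rho_pos: "\<And>a. a \<in> {0..1} \<Longrightarrow> 0 < \<rho> a"
    and rho_le_1: "\<And>a. a \<in> {0..1} \<Longrightarrow> \<rho> a \<le> 1"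
    and v_cont: "continuous_on {0..1} v"
    and v_nonneg: "\<And>t. t \<in> {0..1} \<Longrightarrow> 0 \<le> v t"
    and V_def: "V = integral {0..1} v"
    and V_pos: "0 < V"
begin

definition G :: "real \<Rightarrow> real" where
  "G a = integral {0..a} (\<lambda>s. 1 / \<rho> s)"

lemma objective_eq: "objective \<rho> a = \<rho> a * (1 - G a)"
  by (simp add: objective_def G_def)

lemma G_0 [simp]: "G 0 = 0"
  by (simp add: G_def)

lemma rho_le: "0 \<le> a \<Longrightarrow> a \<le> b \<Longrightarrow> b \<le> 1 \<Longrightarrow> \<rho> a \<le> \<rho> b"
  using rho_mono by (auto simp: mono_on_def)

lemma inv_rho_cont: "continuous_on {0..1} (\<lambda>s. 1 / \<rho> s)"
  by (intro continuous_intros rho_cont) (use rho_pos in force)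

lemma inv_rho_antimono: "antimono_on {0..1} (\<lambda>s. 1 / \<rho> s)"
  using rho_le rho_pos by (auto simp: monotone_on_def intro!: divide_left_mono)

lemma G_nonneg: "a \<in> {0..1} \<Longrightarrow> 0 \<le> G a"
  unfolding G_def by (rule integral_nonneg)
    (use integrable_subinterval_real[OF integrable_continuous_interval[OF inv_rho_cont]] rho_pos
     in \<open>auto intro: less_imp_le\<close>)

lemma v_integrable: "0 \<le> a \<Longrightarrow> b \<le> 1 \<Longrightarrow> v integrable_on {a..b}"
  by (rule integrable_subinterval_real[OF integrable_continuous_interval[OF v_cont]]) auto

end

locale feasible_strategy = pay_to_play +
  fixes x :: "real \<Rightarrow> real"
  assumes feasible: "feasible \<rho> v V x"
begin

definition X :: "real \<Rightarrow> real" where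
  "X t = integral {0..t} x"

definition u :: "real \<Rightarrow> real" where
  "u t = X t / V"

lemma x_integrable: "0 \<le> a \<Longrightarrow> b \<le> 1 \<Longrightarrow> x integrable_on {a..b}"
  using feasible integrable_subinterval_real[of x 0 1 a b] by (auto simp: feasible_def)

lemma x_nonneg: "t \<in> {0..1} \<Longrightarrow> 0 \<le> x t"
  using feasible by (simp add: feasible_def)

lemma alloc_rate_eq: "alloc_rate \<rho> V x t = \<rho> (u t)"
  by (simp add: alloc_rate_def u_def X_def)

lemma x_le: "t \<in> {0..1} \<Longrightarrow> x t \<le> \<rho> (u t) * v t"
  using feasible by (simp add: feasible_def alloc_rate_eq)

lemma X_diff: "0 \<le> s \<Longrightarrow> s \<le> t \<Longrightarrow> t \<le> 1 \<Longrightarrow> X t - X s = integral {s..t} x"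
  using Henstock_Kurzweil_Integration.integral_combine[of 0 s t x] x_integrable by (simp add: X_def)

lemma X_mono: "0 \<le> s \<Longrightarrow> s \<le> t \<Longrightarrow> t \<le> 1 \<Longrightarrow> X s \<le> X t"
  using X_diff[of s t] integral_nonneg[OF x_integrable[of s t]] x_nonneg by fastforce

lemma X_nonneg: "t \<in> {0..1} \<Longrightarrow> 0 \<le> X t"
  using X_mono[of 0 t] by (simp add: X_def)

lemma X_cont: "continuous_on {0..1} X"
  unfolding X_def by (rule indefinite_integral_continuous_1[OF x_integrable]) auto

text \<open>Since \<open>\<rho> \<le> 1\<close> is only known on \<open>[0, 1]\<close>, limited liability gives \<open>x \<le> v\<close> only while
  \<open>X \<le> V\<close>.  Once \<open>X = V\<close> the whole value has been spent, so \<open>v\<close>, and with it \<open>x\<close>, vanishes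
  from then on.\<close>

lemma X_le_V: assumes t: "t \<in> {0..1}" shows "X t \<le> V"
proof (rule ccontr)
  assume "\<not> X t \<le> V"
  then obtain s where s: "0 \<le> s" "s \<le> t" "X s = V"
    using IVT'[of X 0 V t] X_nonneg V_pos t continuous_on_subset[OF X_cont] by (force simp: X_def)
  with \<open>\<not> X t \<le> V\<close> have "s < t" by (cases "s = t") auto
  have "x r \<le> v r" if r: "r \<in> {0..s}" for r
  proof -
    have "u r \<in> {0..1}"
      using X_nonneg[of r] X_mono[of r s] r s t V_pos by (auto simp: u_def)
    then have "\<rho> (u r) * v r \<le> v r"
      using rho_pos rho_le_1 v_nonneg[of r] r t s by (intro mult_left_le_one_le) (auto intro: less_imp_le)
    then show ?thesis using x_le[of r] r s t by simp
  qed
  then have "V \<le> integral {0..s} v"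
    using s t x_integrable v_integrable by (auto simp: X_def intro!: integral_le)
  moreover have "integral {0..s} v + integral {s..1} v = V"
    unfolding V_def using s t v_integrable by (intro Henstock_Kurzweil_Integration.integral_combine) auto
  moreover have "0 \<le> integral {s..1} v"
    using s t v_integrable v_nonneg by (intro integral_nonneg) auto
  ultimately have "integral {s..1} v = 0" by linarith
  then have "v r = 0" if "r \<in> {s..1}" for r
    using continuous_nonneg_integral_0_imp_0[of s 1 v r] continuous_on_subset[OF v_cont] v_nonneg s t
      \<open>s < t\<close> that by auto
  then have "x r = 0" if "r \<in> {s..t}" for r
    using x_le[of r] x_nonneg[of r] that s t by fastforce
  then have "X t = X s"
    using X_diff[of s t] s t integral_cong[of "{s..t}" x "\<lambda>_. 0"] by simp
  with \<open>\<not> X t \<le> V\<close> s show False by simp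
qed

lemma u_range: "t \<in> {0..1} \<Longrightarrow> u t \<in> {0..1}"
  using X_le_V X_nonneg V_pos by (auto simp: u_def)

lemma u_mono: "0 \<le> s \<Longrightarrow> s \<le> t \<Longrightarrow> t \<le> 1 \<Longrightarrow> u s \<le> u t"
  using X_mono V_pos by (simp add: u_def divide_right_mono)

lemma u_eq_integral: "u t = integral {0..t} (\<lambda>s. x s / V)"
  by (simp add: u_def X_def)

lemma u_cont: "continuous_on {0..1} u"
  unfolding u_def by (intro continuous_intros X_cont) (use V_pos in auto)

lemma rho_u_cont: "continuous_on {0..1} (\<lambda>t. \<rho> (u t))"
  by (rule continuous_on_compose2[OF rho_cont u_cont]) (use u_range in auto)

definition q :: "real \<Rightarrow> real" where
  "q t = x t / \<rho> (u t)"

lemma rho_u_pos: "t \<in> {0..1} \<Longrightarrow> 0 < \<rho> (u t)"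
  using rho_pos u_range by blast

lemma q_integrable: "q integrable_on {0..1}"
proof -
  have "(\<lambda>t. 1 / \<rho> (u t) * x t) integrable_on {0..1}"
    using x_integrable x_nonneg rho_u_pos
    by (intro continuous_times_nonneg_integrable_on continuous_intros rho_u_cont)
      (auto simp: less_imp_neq[symmetric])
  then show ?thesis by (simp add: q_def[abs_def])
qed

lemma q_le_v: "t \<in> {0..1} \<Longrightarrow> q t \<le> v t"
  using x_le rho_u_pos by (simp add: q_def divide_le_eq mult.commute)

lemma V_G_le_integral_q: "V * G (u 1) \<le> integral {0..1} q"
proof -
  interpret S: antimono_substitution "\<lambda>s. 1 / \<rho> s" "\<lambda>t. x t / V" 0 1
  proof
    show "(\<lambda>t. x t / V) integrable_on {0..1}"
      using x_integrable by (intro integrable_on_divide) auto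
    show "continuous_on {0..integral {0..1} (\<lambda>t. x t / V)} (\<lambda>s. 1 / \<rho> s)"
      using continuous_on_subset[OF inv_rho_cont] u_range[of 1] by (simp add: u_eq_integral)
    show "antimono_on {0..integral {0..1} (\<lambda>t. x t / V)} (\<lambda>s. 1 / \<rho> s)"
      using monotone_on_subset[OF inv_rho_antimono] u_range[of 1] by (simp add: u_eq_integral)
  qed (use x_nonneg V_pos in auto)
  have "S.X = u"
    by (simp add: S.X_def u_eq_integral fun_eq_iff)
  then have "G (u 1) \<le> integral {0..1} (\<lambda>t. q t / V)"
    using S.integral_le_substituted by (simp add: G_def q_def)
  then show ?thesis
    using V_pos by (simp add: field_simps)
qed

lemma utility_le_objective: "utility \<rho> v V x \<le> V * objective \<rho> (u 1)"
proof -
  define a where "a = u 1"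
  have a: "a \<in> {0..1}" using u_range[of 1] by (simp add: a_def)
  have "\<rho> (u t) * v t - x t = \<rho> (u t) * (v t - q t)" if "t \<in> {0..1}" for t
    using rho_u_pos[OF that] by (simp add: q_def right_diff_distrib)
  then have "utility \<rho> v V x = integral {0..1} (\<lambda>t. \<rho> (u t) * (v t - q t))"
    unfolding utility_def alloc_rate_eq by (rule integral_cong)
  also have "\<dots> \<le> integral {0..1} (\<lambda>t. \<rho> a * (v t - q t))"
  proof (rule integral_le)
    show "(\<lambda>t. \<rho> (u t) * (v t - q t)) integrable_on {0..1}"
      using q_le_v by (intro continuous_times_nonneg_integrable_on rho_u_cont integrable_diff
          q_integrable v_integrable) auto
    show "(\<lambda>t. \<rho> a * (v t - q t)) integrable_on {0..1}"
      by (intro integrable_on_mult_right integrable_diff q_integrable v_integrable) auto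
    fix t :: real assume "t \<in> {0..1}"
    then show "\<rho> (u t) * (v t - q t) \<le> \<rho> a * (v t - q t)"
      using rho_le u_range u_mono q_le_v by (intro mult_right_mono) (auto simp: a_def)
  qed
  also have "\<dots> = \<rho> a * (V - integral {0..1} q)"
    using q_integrable v_integrable[of 0 1] by (simp add: integral_diff V_def)
  also have "\<dots> \<le> \<rho> a * (V - V * G a)"
    using V_G_le_integral_q rho_pos[OF a] by (simp add: a_def)
  finally show ?thesis by (simp add: objective_eq a_def algebra_simps)
qed

lemma total_paid_eq: "total_paid x = V * u 1"
  using V_pos by (simp add: total_paid_def u_def X_def)

end

text \<open>While the strategy \<open>greedy\<close> below pays at the full allowed rate, its paid fraction solves
  \<open>u' = \<rho>(u) v / V\<close>, i.e. \<open>G (u t) = W t / V\<close>, so \<open>level\<close> is obtained by inverting \<open>G\<close>.  The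
  derivative of that inverse is needed also at the end points \<open>0\<close> and \<open>1\<close>, which is why \<open>\<rho>\<close> is
  first extended continuously to the whole real line.\<close>

locale greedy_strategy = pay_to_play +
  fixes a :: real
  assumes a_in: "a \<in> {0..1}" and G_a_le_1: "G a \<le> 1"
begin

definition rho_ext :: "real \<Rightarrow> real" where
  "rho_ext = ext_cont \<rho> 0 1"

lemma rho_ext_cont: "continuous_on S rho_ext"
  unfolding rho_ext_def by (intro continuous_on_ext_cont) (simp add: rho_cont)

lemma rho_ext_eq: "s \<in> {0..1} \<Longrightarrow> rho_ext s = \<rho> s"
  by (simp add: rho_ext_def)

lemma rho_ext_pos: "0 < rho_ext s" and rho_ext_le_1: "rho_ext s \<le> 1"
  using clamp_in_interval[of 0 1 s] rho_pos rho_le_1 by (simp_all add: rho_ext_def ext_cont_def)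

lemma inv_rho_ext_cont: "continuous_on S (\<lambda>s. 1 / rho_ext s)"
  by (intro continuous_intros rho_ext_cont) (simp add: rho_ext_pos less_imp_neq[symmetric])

definition G_ext :: "real \<Rightarrow> real" where
  "G_ext s = integral {-1..s} (\<lambda>r. 1 / rho_ext r)"

lemma G_ext_diff: "-1 \<le> s \<Longrightarrow> s \<le> t \<Longrightarrow> G_ext t - G_ext s = integral {s..t} (\<lambda>r. 1 / rho_ext r)"
  using Henstock_Kurzweil_Integration.integral_combine[of "-1" s t "\<lambda>r. 1 / rho_ext r"]
    integrable_continuous_interval[OF inv_rho_ext_cont]
  by (simp add: G_ext_def)

lemma G_ext_less: assumes "-1 \<le> s" "s < t" shows "G_ext s < G_ext t"
proof -
  have "integral {s..t} (\<lambda>_. 1) \<le> integral {s..t} (\<lambda>r. 1 / rho_ext r)"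
    using integrable_continuous_interval[OF inv_rho_ext_cont] rho_ext_pos rho_ext_le_1
    by (intro integral_le) (auto simp: divide_simps)
  then show ?thesis using G_ext_diff[of s t] assms by simp
qed

lemma G_ext_strict_mono: "strict_mono_on {-1..2} G_ext"
  by (auto simp: strict_mono_on_def intro: G_ext_less)

lemma G_ext_cont: "continuous_on {-1..2} G_ext"
  unfolding G_ext_def
  by (rule indefinite_integral_continuous_1[OF integrable_continuous_interval[OF inv_rho_ext_cont]])

lemma G_ext_deriv: assumes "s \<in> {-1<..<2}" shows "(G_ext has_real_derivative 1 / rho_ext s) (at s)"
proof -
  have "(G_ext has_real_derivative 1 / rho_ext s) (at s within {-1..2})"
    unfolding G_ext_def by (rule integral_has_real_derivative[OF inv_rho_ext_cont]) (use assms in auto)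
  moreover have "at s within {-1..2} = at s"
    by (rule at_within_interior) (use assms in auto)
  ultimately show ?thesis by simp
qed

lemma G_ext_eq: assumes "s \<in> {0..1}" shows "G_ext s = G_ext 0 + G s"
proof -
  have "integral {0..s} (\<lambda>r. 1 / rho_ext r) = G s"
    unfolding G_def by (rule integral_cong) (use assms rho_ext_eq in auto)
  then show ?thesis using G_ext_diff[of 0 s] assms by simp
qed

definition W :: "real \<Rightarrow> real" where
  "W t = integral {0..t} v"

lemma W_cont: "continuous_on {0..1} W"
  unfolding W_def by (rule indefinite_integral_continuous_1[OF v_integrable]) auto

lemma W_mono: "0 \<le> s \<Longrightarrow> s \<le> t \<Longrightarrow> t \<le> 1 \<Longrightarrow> W s \<le> W t"
  using Henstock_Kurzweil_Integration.integral_combine[of 0 s t v] v_integrable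
    integral_nonneg[OF v_integrable[of s t]] v_nonneg
  by (fastforce simp: W_def)

definition stop_time :: real where
  "stop_time = (SOME T. T \<in> {0..1} \<and> W T = V * G a)"

lemma stop_time: "stop_time \<in> {0..1}" "W stop_time = V * G a"
proof -
  have "\<exists>T. T \<in> {0..1} \<and> W T = V * G a"
    using IVT'[OF _ _ _ W_cont, of "V * G a"] G_nonneg[OF a_in] G_a_le_1 V_pos
    by (force simp: W_def V_def[symmetric])
  then show "stop_time \<in> {0..1}" "W stop_time = V * G a"
    unfolding stop_time_def by (metis (mono_tags, lifting) someI_ex)+
qed

definition level :: "real \<Rightarrow> real" where
  "level t = inv_into {-1..2} G_ext (G_ext 0 + W t / V)"

lemma level: assumes "t \<in> {0..stop_time}"
  shows "level t \<in> {0..a}" "G_ext (level t) = G_ext 0 + W t / V"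
proof -
  have "0 \<le> W t" "W t \<le> V * G a"
    using W_mono[of 0 t] W_mono[of t stop_time] stop_time assms by (auto simp: W_def)
  then have "G 0 \<le> W t / V" "W t / V \<le> G a"
    using V_pos by (auto simp: field_simps)
  moreover have "continuous_on {0..a} G"
    unfolding G_def using a_in
    by (intro indefinite_integral_continuous_1 integrable_continuous_interval
        continuous_on_subset[OF inv_rho_cont]) auto
  ultimately obtain b where b: "b \<in> {0..a}" "G b = W t / V"
    using IVT'[of G 0 "W t / V" a] a_in by auto
  then have "G_ext b = G_ext 0 + W t / V"
    using G_ext_eq[of b] a_in by simp
  moreover have "level t = b"
    unfolding level_def calculation[symmetric]
    using b a_in by (intro inv_into_f_f[OF strict_mono_on_imp_inj_on[OF G_ext_strict_mono]]) auto
  ultimately show "level t \<in> {0..a}" "G_ext (level t) = G_ext 0 + W t / V"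
    using b by auto
qed

lemma level_0: "level 0 = 0"
  using level(1)[of 0] stop_time G_ext_strict_mono level(2)[of 0]
    strict_mono_on_imp_inj_on[OF G_ext_strict_mono] a_in
  by (auto simp: W_def inj_on_def)

lemma level_stop_time: "level stop_time = a"
  using level[of stop_time] stop_time a_in G_ext_eq[of a] V_pos
    strict_mono_on_imp_inj_on[OF G_ext_strict_mono]
  by (auto simp: inj_on_def)

lemma level_deriv: assumes "t \<in> {0..stop_time}"
  shows "(level has_real_derivative \<rho> (level t) * (v t / V)) (at t within {0..1})"
proof -
  have lt: "level t \<in> {0..1}" using level(1)[OF assms] a_in by auto
  have "(inv_into {-1..2} G_ext has_real_derivative inverse (1 / rho_ext (level t)))
      (at (G_ext (level t)))"
    using lt rho_ext_pos[of "level t"]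
    by (intro inv_into_has_real_derivative G_ext_strict_mono G_ext_cont G_ext_deriv) auto
  then have inv: "(inv_into {-1..2} G_ext has_real_derivative \<rho> (level t)) (at (G_ext 0 + W t / V))"
    using level(2)[OF assms] rho_ext_eq[OF lt] by simp
  have "(W has_real_derivative v t) (at t within {0..1})"
    unfolding W_def by (rule integral_has_real_derivative[OF v_cont]) (use assms stop_time in auto)
  then have "((\<lambda>t. G_ext 0 + W t / V) has_real_derivative v t / V) (at t within {0..1})"
    using V_pos by (auto intro!: derivative_eq_intros)
  from DERIV_chain2[OF inv this] show ?thesis
    unfolding level_def by simp
qed

lemma full_rate_has_integral: assumes "s \<in> {0..stop_time}"
  shows "((\<lambda>t. \<rho> (level t) * v t) has_integral V * level s) {0..s}"
proof -
  have "((\<lambda>t. \<rho> (level t) * (v t / V)) has_integral level s - level 0) {0..s}"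
  proof (rule fundamental_theorem_of_calculus)
    fix t assume "t \<in> {0..s}"
    then have "(level has_real_derivative \<rho> (level t) * (v t / V)) (at t within {0..s})"
      using assms stop_time by (intro DERIV_subset[OF level_deriv]) auto
    then show "(level has_vector_derivative \<rho> (level t) * (v t / V)) (at t within {0..s})"
      by (simp add: has_real_derivative_iff_has_vector_derivative)
  qed (use assms in auto)
  from has_integral_mult_right[OF this, of V] show ?thesis
    using V_pos level_0 by simp
qed

definition greedy :: "real \<Rightarrow> real" where
  "greedy t = (if t < stop_time then \<rho> (level t) * v t else 0)"

lemma greedy_has_integral: assumes "s \<in> {0..1}"
  shows "(greedy has_integral V * level (min s stop_time)) {0..s}"
proof (cases "s \<le> stop_time")
  case True
  then have "(greedy has_integral V * level s) {0..s}"
    using assms by (intro has_integral_spike_finite[of "{stop_time}", OF _ _ full_rate_has_integral])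
      (auto simp: greedy_def)
  then show ?thesis using True by simp
next
  case False
  have "(greedy has_integral V * level stop_time) {0..stop_time}"
    using stop_time
    by (intro has_integral_spike_finite[of "{stop_time}", OF _ _ full_rate_has_integral])
      (auto simp: greedy_def)
  moreover have "(greedy has_integral 0) {stop_time..s}"
    by (rule has_integral_eq[OF _ has_integral_0]) (simp add: greedy_def)
  ultimately show ?thesis
    using has_integral_combine[of 0 stop_time s] False stop_time by fastforce
qed

lemma alloc_rate_greedy: "t \<in> {0..1} \<Longrightarrow> alloc_rate \<rho> V greedy t = \<rho> (level (min t stop_time))"
  using integral_unique[OF greedy_has_integral] V_pos by (simp add: alloc_rate_def)

lemma greedy_feasible: "feasible \<rho> v V greedy"
  unfolding feasible_def
proof safe
  show "greedy integrable_on {0..1}" using greedy_has_integral[of 1] by auto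
  fix t :: real assume t: "t \<in> {0..1}"
  have "level (min t stop_time) \<in> {0..1}"
    using level(1)[of "min t stop_time"] t stop_time a_in by auto
  then have "0 < \<rho> (level (min t stop_time))" by (rule rho_pos)
  then show "0 \<le> greedy t" "greedy t \<le> alloc_rate \<rho> V greedy t * v t"
    using v_nonneg[OF t] alloc_rate_greedy[OF t] by (auto simp: greedy_def min_def)
qed

lemma total_paid_greedy: "total_paid greedy = a * V"
proof -
  have "min 1 stop_time = stop_time" using stop_time by simp
  then show ?thesis
    using integral_unique[OF greedy_has_integral[of 1]] level_stop_time by (simp add: total_paid_def)
qed

text \<open>After the stop time the item is allocated at the constant rate \<open>\<rho> a\<close> for free, and
  the value left over at that time is \<open>V - W stop_time = V (1 - G a)\<close>.\<close>

lemma utility_greedy: "utility \<rho> v V greedy = V * objective \<rho> a"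
proof -
  let ?T = stop_time and ?f = "\<lambda>t. if t < stop_time then 0 else \<rho> a * v t"
  have T: "0 \<le> ?T" "?T \<le> 1" using stop_time by auto
  have "integral {?T..1} v = V - W ?T"
    using Henstock_Kurzweil_Integration.integral_combine[of 0 ?T 1 v] v_integrable[of 0 1] T
    by (simp add: W_def V_def)
  then have "(v has_integral V - W ?T) {?T..1}"
    using integrable_integral[OF v_integrable[of ?T 1]] T by simp
  then have "((\<lambda>t. \<rho> a * v t) has_integral \<rho> a * (V - W ?T)) {?T..1}"
    by (rule has_integral_mult_right)
  then have "(?f has_integral \<rho> a * (V - W ?T)) {?T..1}"
    by (rule has_integral_eq[rotated]) auto
  moreover have "(?f has_integral 0) {0..?T}"
    by (rule has_integral_spike_finite[of "{?T}", OF _ _ has_integral_0]) auto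
  ultimately have "(?f has_integral \<rho> a * (V - W ?T)) {0..1}"
    using has_integral_combine[OF T] by fastforce
  moreover have "utility \<rho> v V greedy = integral {0..1} ?f"
    unfolding utility_def
    by (rule integral_cong) (use alloc_rate_greedy level_stop_time in \<open>auto simp: greedy_def min_def\<close>)
  ultimately have "utility \<rho> v V greedy = \<rho> a * (V - W ?T)"
    by (simp add: integral_unique)
  then show ?thesis
    using stop_time by (simp add: objective_eq algebra_simps)
qed

end

context pay_to_play
begin

lemma feasible_utility_le_objective:
  assumes "feasible \<rho> v V x"
  shows "total_paid x / V \<in> {0..1}" "utility \<rho> v V x \<le> V * objective \<rho> (total_paid x / V)"
proof -
  interpret feasible_strategy \<rho> v V x by unfold_locales (rule assms)
  show "total_paid x / V \<in> {0..1}" "utility \<rho> v V x \<le> V * objective \<rho> (total_paid x / V)"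
    using utility_le_objective total_paid_eq u_range[of 1] V_pos by simp_all
qed

lemma G_less_1_of_maximizer:
  assumes "a \<in> {0..1}" and "objective \<rho> 0 \<le> objective \<rho> a"
  shows "G a < 1"
proof -
  have "0 < \<rho> a * (1 - G a)"
    using assms(2) rho_pos[of 0] by (simp add: objective_eq)
  then show ?thesis
    using rho_pos[OF assms(1)] by (simp add: zero_less_mult_iff)
qed

lemma ex_dominant_paying_maximizer:
  assumes a: "a \<in> {0..1}" and max: "\<forall>b\<in>{0..1}. objective \<rho> b \<le> objective \<rho> a"
  shows "\<exists>x. dominant \<rho> v V x \<and> total_paid x = a * V \<and> utility \<rho> v V x = V * objective \<rho> a"
proof -
  interpret greedy_strategy \<rho> v V a
    using a G_less_1_of_maximizer[OF a] max by unfold_locales auto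
  have "utility \<rho> v V y \<le> utility \<rho> v V greedy" if "feasible \<rho> v V y" for y
  proof -
    have "utility \<rho> v V y \<le> V * objective \<rho> (total_paid y / V)"
      by (rule feasible_utility_le_objective(2)[OF that])
    also have "\<dots> \<le> V * objective \<rho> a"
      using max feasible_utility_le_objective(1)[OF that] V_pos by (intro mult_left_mono) auto
    finally show ?thesis
      by (simp add: utility_greedy)
  qed
  then show ?thesis
    using greedy_feasible total_paid_greedy utility_greedy unfolding dominant_def by blast
qed

lemma dominant_pays_strict_maximizer:
  assumes a: "a \<in> {0..1}" and strict: "\<forall>b\<in>{0..1}. b \<noteq> a \<longrightarrow> objective \<rho> b < objective \<rho> a"
    and x: "dominant \<rho> v V x"
  shows "total_paid x = a * V"
proof -
  have "\<forall>b\<in>{0..1}. objective \<rho> b \<le> objective \<rho> a"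
    using strict by (metis order.order_iff_strict)
  then obtain y where y: "feasible \<rho> v V y" "utility \<rho> v V y = V * objective \<rho> a"
    using ex_dominant_paying_maximizer[OF a] unfolding dominant_def by blast
  have feasible_x: "feasible \<rho> v V x"
    using x by (simp add: dominant_def)
  have "V * objective \<rho> a \<le> V * objective \<rho> (total_paid x / V)"
    using x y feasible_utility_le_objective(2)[OF feasible_x] unfolding dominant_def by auto
  then have "\<not> objective \<rho> (total_paid x / V) < objective \<rho> a"
    using V_pos by simp
  then have "total_paid x / V = a"
    using strict feasible_utility_le_objective(1)[OF feasible_x] by blast
  then show ?thesis
    using V_pos by (simp add: field_simps)
qed

end

theorem lemma5:
  fixes \<rho> v :: "real \<Rightarrow> real" and V Xopt :: real
  assumes rho_cont: "continuous_on {0..1} \<rho>"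
    and rho_mono: "mono_on {0..1} \<rho>"
    and rho_range: "\<forall>a\<in>{0..1}. 0 < \<rho> a \<and> \<rho> a \<le> 1"
    and v_lip: "\<exists>L. L-lipschitz_on {0..1} v"
    and v_nonneg: "\<forall>t\<in>{0..1}. 0 \<le> v t"
    and V_def: "V = integral {0..1} v"
    and Xopt_in: "Xopt \<in> {0..1}"
    and Xopt_max: "\<forall>a\<in>{0..1}. objective \<rho> a \<le> objective \<rho> Xopt"
  shows "(\<exists>x. dominant \<rho> v V x \<and> total_paid x \<ge> Xopt * V) \<and>
         ((\<forall>a\<in>{0..1}. a \<noteq> Xopt \<longrightarrow> objective \<rho> a < objective \<rho> Xopt) \<longrightarrow>
            (\<forall>x. dominant \<rho> v V x \<longrightarrow> total_paid x \<ge> Xopt * V))"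
proof -
  have v_cont: "continuous_on {0..1} v"
    using v_lip lipschitz_on_continuous_on by blast
  have "0 \<le> V"
    unfolding V_def using v_nonneg integrable_continuous_interval[OF v_cont] by (auto intro: integral_nonneg)
  show ?thesis
  proof (cases "V = 0")
    case True
    then have "dominant \<rho> v V (\<lambda>_. 0)"
      using continuous_nonneg_integral_0_imp_0[of 0 1 v] v_cont v_nonneg V_def
      by (intro dominant_zero_of_zero_value) auto
    then show ?thesis
      using total_paid_nonneg True by (auto simp: dominant_def total_paid_def)
  next
    case False
    interpret pay_to_play \<rho> v V
      using rho_cont rho_mono rho_range v_cont v_nonneg V_def \<open>0 \<le> V\<close> False by unfold_locales auto
    show ?thesis
      using ex_dominant_paying_maximizer[OF Xopt_in Xopt_max] dominant_pays_strict_maximizer[OF Xopt_in]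
      by force
  qed
qed

end
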